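(* For all integers $n\geq 0$, $k\geq 1$ and $i\geq 0$, \begin{align*} \bar a_{2^ki+\frac{2^k-6}{2}}(8n+7)&\equiv 0 \pmod{2^{k+3}},\\ \bar a_{2^ki+\frac{2^k-2}{2}}(8n+7)&\equiv 0 \pmod{2^{k+3}}. \end{align*}
   Context: For an integer $k\geq 1$ let $f_k:=\prod_{n\geq 1}(1-q^{kn})$. For an integer $c$, $\bar a_c(n)$ denotes the coefficient of $q^n$ in the power series $\dfrac{f_4^{c-1}}{f_1^2f_2^{2c-3}}$, i.e. $\sum_{n\geq 0}\bar a_c(n)q^n=\dfrac{f_4^{c-1}}{f_1^2f_2^{2c-3}}$ (for $c\geq1$ these are the generalized overcubic partition numbers). *)

theory Defs
  imports "HOL-Computational_Algebra.Formal_Power_Series"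
begin

(* f_k = prod_{m>=1} (1 - q^(k m)), as a formal power series over the rationals.
   The coefficient of q^n of the infinite product equals that of the finite
   product over m = 1..n (for k >= 1, later factors are 1 + O(q^(n+1))). *)
definition eta_f :: "nat \<Rightarrow> rat fps" where
  "eta_f k = Abs_fps (\<lambda>n. fps_nth (\<Prod>m\<in>{1..n}. (1 - fps_X ^ (k * m))) n)"

definition fps_pow_int :: "rat fps \<Rightarrow> int \<Rightarrow> rat fps" where
  "fps_pow_int F e = (if 0 \<le> e then F ^ nat e else inverse F ^ nat (- e))"

definition abar :: "int \<Rightarrow> nat \<Rightarrow> rat" where
  "abar c n = fps_nth (fps_pow_int (eta_f 4) (c - 1) * fps_pow_int (eta_f 1) (-2)
                       * fps_pow_int (eta_f 2) (-(2 * c - 3))) n"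

end

(* Write f_k for eta_f k and phi(q) for the sum over all integers s of q^(s^2), so that theta below
   is phi(-q). Gauss's identity f_1^2 = phi(-q) f_2 and the identity f(-q) f_1 f_4 = f_2^3 turn the
   generating function f_4^(c-1) / (f_1^2 f_2^(2c-3)) into phi(q) phi(-q^2)^(-(c+1)).

   The coefficients of phi(-q) vanish at exponents 2 and 3 mod 4 and are even at exponents 1 mod 4.
   Following the 2-adic valuations of coefficients residue class by residue class through inversion
   and repeated squaring shows: if c + 1 = 2^(k-1) r or c + 1 = 2^(k-1) r - 2, then the coefficients
   of phi(-q)^(-(c+1)) at exponents 3 mod 4 are divisible by 2^(k+2). In the coefficient of q^(8n+7)
   of phi(q) phi(-q^2)^(-(c+1)) only the terms q^(s^2) of phi(q) with odd s contribute; they carry a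
   factor 2, and s^2 = 1 mod 8 puts the complementary exponent (8n+7-s^2)/2 into the class 3 mod 4.

   Gauss's identity comes from a finite form of the Jacobi triple product: the polynomials
   q^(s^2) [2n, n+s]_(q^2) sum with alternating signs to (q; q^2)_n^2, and as n grows they tend to
   q^(s^2) / f_2. *)

theory Submission
  imports Defs "HOL-Number_Theory.Pocklington"
begin

unbundle fps_syntax

section \<open>Truncated products for f_k\<close>

lemma fps_cutoff_mult:
  "fps_cutoff n (f * g) = fps_cutoff n (fps_cutoff n f * fps_cutoff n (g :: 'a::comm_semiring_1 fps))"
  by (auto simp: fps_eq_iff fps_mult_nth intro!: sum.cong)

lemma fps_cutoff_mult_cong:
  "fps_cutoff n f = fps_cutoff n f' \<Longrightarrow> fps_cutoff n g = fps_cutoff n g' \<Longrightarrow>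
   fps_cutoff n (f * g) = fps_cutoff n (f' * (g' :: 'a::comm_semiring_1 fps))"
  using fps_cutoff_mult[of n f g] fps_cutoff_mult[of n f' g'] by simp

lemma fps_cutoff_power_cong:
  "fps_cutoff n f = fps_cutoff n g \<Longrightarrow> fps_cutoff n (f ^ k) = fps_cutoff n (g ^ k :: 'a::comm_semiring_1 fps)"
proof (induction k)
  case (Suc k)
  then show ?case using fps_cutoff_mult_cong[OF Suc.prems Suc.IH[OF Suc.prems]] by simp
qed simp

lemma fps_cutoff_prod_cong:
  "(\<And>i. i \<in> S \<Longrightarrow> fps_cutoff n (f i) = fps_cutoff n (g i)) \<Longrightarrow>
   fps_cutoff n (\<Prod>i\<in>S. f i) = fps_cutoff n (\<Prod>i\<in>S. g i :: 'a::comm_semiring_1 fps)"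
proof (induction S rule: infinite_finite_induct)
  case (insert i S)
  then show ?case using fps_cutoff_mult_cong[of n "f i" "g i"] by simp
qed simp_all

lemma fps_cutoff_sum: "fps_cutoff n (\<Sum>i\<in>S. f i) = (\<Sum>i\<in>S. fps_cutoff n (f i :: 'a::comm_monoid_add fps))"
  by (induction S rule: infinite_finite_induct) (simp_all add: fps_cutoff_add)

lemma fps_cutoff_sum_cong:
  "(\<And>i. i \<in> S \<Longrightarrow> fps_cutoff n (f i) = fps_cutoff n (g i)) \<Longrightarrow>
   fps_cutoff n (\<Sum>i\<in>S. f i) = fps_cutoff n (\<Sum>i\<in>S. g i :: 'a::comm_monoid_add fps)"
  by (simp add: fps_cutoff_sum)

lemma fps_cutoff_X_power_mult: "n \<le> e \<Longrightarrow> fps_cutoff n (fps_X ^ e * f) = 0"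
  by (simp add: fps_eq_iff fps_X_power_mult_nth)

lemma fps_cutoff_eqI: "(\<And>n. fps_cutoff n f = fps_cutoff n g) \<Longrightarrow> f = g"
  by (metis fps_cutoff_eq_fps_cutoff_iff fps_ext lessI)

definition eta_prod :: "nat \<Rightarrow> nat \<Rightarrow> rat fps" where
  "eta_prod k M = (\<Prod>m\<in>{1..M}. 1 - fps_X ^ (k * m))"

lemma eta_prod_0 [simp]: "eta_prod k 0 = 1"
  by (simp add: eta_prod_def)

lemma eta_prod_Suc: "eta_prod k (Suc M) = eta_prod k M * (1 - fps_X ^ (k * Suc M))"
  by (simp add: eta_prod_def)

lemma eta_prod_nth_0 [simp]: "k \<ge> 1 \<Longrightarrow> eta_prod k M $ 0 = 1"
  by (induction M) (simp_all add: eta_prod_Suc)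

lemma fps_cutoff_eta_prod:
  assumes "k \<ge> 1" "n \<le> Suc M" "M \<le> L"
  shows "fps_cutoff n (eta_prod k L) = fps_cutoff n (eta_prod k M)"
proof -
  have "{1..L} = {1..M} \<union> {Suc M..L}" using assms(3) by auto
  then have "eta_prod k L = eta_prod k M * (\<Prod>m\<in>{Suc M..L}. 1 - fps_X ^ (k * m))"
    unfolding eta_prod_def by (simp add: prod.union_disjoint)
  also have "fps_cutoff n \<dots> = fps_cutoff n (eta_prod k M * (\<Prod>m\<in>{Suc M..L}. 1))"
  proof (intro fps_cutoff_mult_cong fps_cutoff_prod_cong refl)
    fix m assume "m \<in> {Suc M..L}"
    then have "Suc M \<le> m" by simp
    moreover have "m \<le> k * m" using assms(1) by simp
    ultimately have "n \<le> k * m" using assms(2) by linarith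
    then show "fps_cutoff n (1 - fps_X ^ (k * m)) = fps_cutoff n (1 :: rat fps)"
      by (simp add: fps_eq_iff)
  qed
  finally show ?thesis by (simp only: prod.neutral_const mult_1_right)
qed

lemma eta_f_nth:
  assumes "k \<ge> 1" "n \<le> M"
  shows "eta_f k $ n = eta_prod k M $ n"
proof -
  have "eta_f k $ n = eta_prod k n $ n"
    unfolding eta_f_def eta_prod_def by (rule fps_nth_Abs_fps)
  also have "fps_cutoff (Suc n) (eta_prod k M) = fps_cutoff (Suc n) (eta_prod k n)"
    using assms by (intro fps_cutoff_eta_prod) simp_all
  then have "eta_prod k n $ n = eta_prod k M $ n"
    by (metis fps_cutoff_eq_fps_cutoff_iff lessI)
  finally show ?thesis .
qed

lemma fps_cutoff_eta_f: "k \<ge> 1 \<Longrightarrow> n \<le> M \<Longrightarrow> fps_cutoff n (eta_f k) = fps_cutoff n (eta_prod k M)"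
  by (simp add: fps_eq_iff eta_f_nth)

lemma eta_f_nth_0 [simp]: "eta_f k $ 0 = 1"
  by (simp add: eta_f_def)

section \<open>The substitutions q := -q and q := q^d\<close>

lemma fps_compose_uminus_X_nth: "(f oo - fps_X) $ n = (-1) ^ n * (f $ n :: 'a::comm_ring_1)"
  by (simp add: fps_compose_uminus')

lemma fps_cutoff_compose_uminus_X:
  "fps_cutoff n (f oo - fps_X) = fps_cutoff n (f :: 'a::comm_ring_1 fps) oo - fps_X"
  by (simp add: fps_eq_iff fps_compose_uminus_X_nth)

lemma fps_compose_X_power_nth:
  assumes "d > 0"
  shows "(f oo fps_X ^ d) $ n = (if d dvd n then f $ (n div d) else (0 :: 'a::comm_ring_1))"
proof -
  have "(f oo fps_X ^ d) $ n = (\<Sum>i=0..n. if n = d * i then f $ i else 0)"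
    unfolding fps_compose_nth by (intro sum.cong) (simp_all add: power_mult[symmetric])
  also have "\<dots> = (if d dvd n then f $ (n div d) else 0)"
  proof (cases "d dvd n")
    case True
    then have "{0..n} \<inter> {i. n = d * i} = {n div d}"
      using assms by (auto intro: order_trans[OF _ mult_le_mono1[of 1 d]])
    then show ?thesis using True by (simp add: sum.If_cases)
  qed (auto intro!: sum.neutral)
  finally show ?thesis .
qed

lemma fps_compose_X_power_X_power: "d > 0 \<Longrightarrow> (fps_X ^ j :: 'a::idom fps) oo fps_X ^ d = fps_X ^ (d * j)"
  by (simp add: fps_compose_power[symmetric] power_mult)

lemma eta_prod_compose_X_power: "d > 0 \<Longrightarrow> eta_prod k M oo fps_X ^ d = eta_prod (d * k) M"
  by (simp add: eta_prod_def fps_compose_prod_distrib fps_compose_sub_distrib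
      fps_compose_X_power_X_power mult.assoc)

lemma eta_f_compose_X_power:
  assumes "d > 0" "k \<ge> 1"
  shows "eta_f k oo fps_X ^ d = eta_f (d * k)"
proof (rule fps_ext)
  fix n
  have "(eta_f k oo fps_X ^ d) $ n = (eta_prod k n oo fps_X ^ d) $ n"
    using assms by (simp add: fps_compose_X_power_nth eta_f_nth)
  also have "\<dots> = eta_f (d * k) $ n"
    using assms eta_f_nth[of "d * k" n n] by (simp add: eta_prod_compose_X_power)
  finally show "(eta_f k oo fps_X ^ d) $ n = eta_f (d * k) $ n" .
qed

section \<open>The identity f(-q) f_1 f_4 = f_2^3\<close>

lemma prod_atLeast1_atMost_double:
  "(\<Prod>m\<in>{1..2*M::nat}. f m) = (\<Prod>i\<in>{1..M}. f (2*i - 1) * (f (2*i) :: 'a::comm_monoid_mult))"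
  by (induction M) (simp_all add: mult_ac)

lemma eta_prod_double:
  "eta_prod k (2*M) = (\<Prod>i\<in>{1..M}. 1 - fps_X ^ (k * (2*i - 1))) * eta_prod (2*k) M"
  unfolding eta_prod_def prod_atLeast1_atMost_double prod.distrib by (simp only: mult.left_commute mult.commute)

definition odd_prod :: "nat \<Rightarrow> rat fps" where
  "odd_prod M = (\<Prod>i\<in>{1..M}. 1 - fps_X ^ (2*i - 1))"

lemma eta_prod_1_double: "eta_prod 1 (2*M) = odd_prod M * eta_prod 2 M"
  using eta_prod_double[of 1 M] by (simp add: odd_prod_def)

lemma odd_prod_mult_compose_uminus_X:
  "odd_prod M * (odd_prod M oo - fps_X) = (\<Prod>i\<in>{1..M}. 1 - fps_X ^ (2 * (2*i - 1)))"
proof -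
  have "(1 - fps_X ^ j) * ((1 - fps_X ^ j) oo - fps_X) = 1 - (fps_X ^ (2 * j) :: rat fps)" if "odd j" for j
    using that by (simp add: fps_compose_sub_distrib fps_compose_power[symmetric] power_mult
        algebra_simps flip: power_add mult_2)
  then show ?thesis
    by (simp add: odd_prod_def fps_compose_prod_distrib prod.distrib[symmetric])
qed

lemma eta_prod_2_compose_uminus_X: "eta_prod 2 M oo - fps_X = eta_prod 2 M"
  by (simp add: eta_prod_def fps_compose_prod_distrib fps_compose_sub_distrib
      fps_compose_power[symmetric] power_mult)

lemma eta_prod_1_compose_uminus_X:
  "(eta_prod 1 (2*M) oo - fps_X) * eta_prod 1 (2*M) * eta_prod 4 M = eta_prod 2 M ^ 2 * eta_prod 2 (2*M)"
proof -
  have "(eta_prod 1 (2*M) oo - fps_X) * eta_prod 1 (2*M) * eta_prod 4 M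
      = (odd_prod M * (odd_prod M oo - fps_X)) * eta_prod 4 M * eta_prod 2 M ^ 2"
    unfolding eta_prod_1_double
    by (simp add: fps_compose_mult_distrib eta_prod_2_compose_uminus_X power2_eq_square mult_ac)
  also have "\<dots> = eta_prod 2 M ^ 2 * eta_prod 2 (2*M)"
    using eta_prod_double[of 2 M] by (simp add: odd_prod_mult_compose_uminus_X)
  finally show ?thesis .
qed

lemma eta_f_1_compose_uminus_X: "(eta_f 1 oo - fps_X) * eta_f 1 * eta_f 4 = eta_f 2 ^ 3"
proof (rule fps_cutoff_eqI)
  fix n
  have eta_1: "fps_cutoff n (eta_f 1) = fps_cutoff n (eta_prod 1 (2*n))"
    by (simp add: fps_cutoff_eta_f)
  have "fps_cutoff n ((eta_f 1 oo - fps_X) * eta_f 1 * eta_f 4)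
      = fps_cutoff n ((eta_prod 1 (2*n) oo - fps_X) * eta_prod 1 (2*n) * eta_prod 4 n)"
    by (intro fps_cutoff_mult_cong eta_1 fps_cutoff_eta_f)
      (simp_all only: fps_cutoff_compose_uminus_X eta_1 order_refl)
  also have "\<dots> = fps_cutoff n (eta_prod 2 n ^ 2 * eta_prod 2 (2*n))"
    by (simp only: eta_prod_1_compose_uminus_X)
  also have "\<dots> = fps_cutoff n (eta_f 2 ^ 2 * eta_f 2)"
    by (intro fps_cutoff_mult_cong fps_cutoff_power_cong) (simp_all add: fps_cutoff_eta_f[symmetric])
  also have "eta_f 2 ^ 2 * eta_f 2 = eta_f 2 ^ 3"
    by (simp only: power2_eq_square power3_eq_cube)
  finally show "fps_cutoff n ((eta_f 1 oo - fps_X) * eta_f 1 * eta_f 4) = fps_cutoff n (eta_f 2 ^ 3)" .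
qed

section \<open>Gauss's identity f_1^2 = phi(-q) f_2\<close>

(* jtp_coeff n s is q^(s^2) times the Gaussian binomial [2n, n+s] in base q^2 (see
   jtp_closed_form). The index s stands for +s and -s, so the neighbour s - 1 of s = 0 is read as 1. *)
fun jtp_coeff :: "nat \<Rightarrow> nat \<Rightarrow> rat fps" where
  "jtp_coeff 0 s = (if s = 0 then 1 else 0)"
| "jtp_coeff (Suc n) s = (1 + fps_X ^ (4*n+2)) * jtp_coeff n s
     + fps_X ^ (2*n+1) * (jtp_coeff n (if s = 0 then 1 else s - 1) + jtp_coeff n (s + 1))"

lemma jtp_coeff_eq_0: "n < s \<Longrightarrow> jtp_coeff n s = 0"
  by (induction n arbitrary: s) auto

lemma jtp_coeff_diag: "jtp_coeff n n = fps_X ^ (n^2)"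
proof (induction n)
  case (Suc n)
  have "jtp_coeff (Suc n) (Suc n) = fps_X ^ (2*n+1) * fps_X ^ (n^2)"
    using Suc jtp_coeff_eq_0[of n "Suc n"] jtp_coeff_eq_0[of n "Suc n + 1"] by simp
  also have "\<dots> = fps_X ^ (Suc n ^ 2)"
    by (simp add: power_add[symmetric] power2_eq_square)
  finally show ?case .
qed simp

definition jtp_sum :: "nat \<Rightarrow> rat fps" where
  "jtp_sum n = jtp_coeff n 0 + 2 * (\<Sum>s=1..n. (-1) ^ s * jtp_coeff n s)"

lemma jtp_sum_Suc: "jtp_sum (Suc n) = (1 - fps_X ^ (2*n+1)) ^ 2 * jtp_sum n"
proof -
  let ?D = "jtp_coeff n" and ?x = "fps_X ^ (2*n+1) :: rat fps"
  let ?T = "\<Sum>s=1..n. (-1) ^ s * ?D s"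
  have shift_down: "(\<Sum>s=1..Suc n. (-1) ^ s * ?D (s - 1)) = - (?D 0 + ?T)"
  proof -
    have "(\<Sum>s=1..Suc n. (-1) ^ s * ?D (s - 1)) = - (\<Sum>s=0..n. (-1) ^ s * ?D s)"
      unfolding One_nat_def sum.shift_bounds_cl_Suc_ivl by (simp add: sum_negf)
    also have "(\<Sum>s=0..n. (-1) ^ s * ?D s) = ?D 0 + ?T"
      by (simp add: sum.atLeast_Suc_atMost)
    finally show ?thesis .
  qed
  have shift_up: "(\<Sum>s=1..Suc n. (-1) ^ s * ?D (s + 1)) = - ?T - ?D 1"
  proof -
    have "(\<Sum>s=1..Suc n. (-1) ^ s * ?D (s + 1)) = - (\<Sum>s=2..Suc (Suc n). (-1) ^ s * ?D s)"
      unfolding One_nat_def numeral_2_eq_2 sum.shift_bounds_cl_Suc_ivl by (simp add: sum_negf)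
    also have "(\<Sum>s=2..Suc (Suc n). (-1) ^ s * ?D s) = ?T + ?D 1"
      by (simp add: sum.atLeast_Suc_atMost jtp_coeff_eq_0 numeral_2_eq_2)
    finally show ?thesis by simp
  qed
  have top: "(\<Sum>s=1..Suc n. (-1) ^ s * ?D s) = ?T"
    by (simp add: jtp_coeff_eq_0)
  have "jtp_sum (Suc n) = (1 + ?x * ?x) * (?D 0 + 2 * ?T) + 2 * ?x * (?D 1
      + (\<Sum>s=1..Suc n. (-1) ^ s * ?D (s - 1)) + (\<Sum>s=1..Suc n. (-1) ^ s * ?D (s + 1)))"
    by (simp add: jtp_sum_def sum.distrib sum_distrib_left top jtp_coeff_eq_0 algebra_simps
        flip: power_add mult_2)
  also have "\<dots> = (1 - ?x) ^ 2 * jtp_sum n"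
    unfolding shift_down shift_up jtp_sum_def by (simp add: power2_eq_square algebra_simps)
  finally show ?thesis .
qed

lemma odd_prod_Suc: "odd_prod (Suc n) = odd_prod n * (1 - fps_X ^ (2*n+1))"
  by (simp add: odd_prod_def)

lemma jtp_sum_eq_odd_prod_sq: "jtp_sum n = odd_prod n ^ 2"
proof (induction n)
  case (Suc n)
  then show ?case by (simp add: jtp_sum_Suc odd_prod_Suc power_mult_distrib)
qed (simp add: jtp_sum_def odd_prod_def)

lemma eta_prod_add2:
  "eta_prod k (m + 2) = eta_prod k m * (1 - fps_X ^ (k*m + k)) * (1 - fps_X ^ (k*m + 2*k))"
proof -
  have "m + 2 = Suc (Suc m)" "k * Suc m = k*m + k" "k * Suc (Suc m) = k*m + 2*k"
    by simp_all
  then show ?thesis by (simp only: eta_prod_Suc)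
qed

lemma jtp_closed_form_upper:
  assumes IH: "\<And>j. j \<le> n \<Longrightarrow>
      jtp_coeff n j * eta_prod 2 (n + j) * eta_prod 2 (n - j) = fps_X ^ (j^2) * eta_prod 2 (2*n)"
    and "s \<le> n"
  shows "fps_X ^ (2*n+1) * jtp_coeff n (s + 1) * eta_prod 2 (Suc n + s) * eta_prod 2 (Suc n - s)
       = fps_X ^ (s^2) * eta_prod 2 (2*n)
         * (fps_X ^ (2*(n+s)+2) * (1 - fps_X ^ (2*(n-s))) * (1 - fps_X ^ (2*(n-s)+2)))"
proof (cases "s = n")
  case True
  then show ?thesis by (simp add: jtp_coeff_eq_0)
next
  case False
  define m where "m = n - (s + 1)"
  have W_plus: "eta_prod 2 (Suc n + s) = eta_prod 2 (n + (s + 1))"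
    by simp
  have W_minus: "eta_prod 2 (Suc n - s)
      = eta_prod 2 (n - (s + 1)) * (1 - fps_X ^ (2*(n-s))) * (1 - fps_X ^ (2*(n-s)+2))"
  proof -
    have "Suc n - s = m + 2" "2*m + 2 = 2*(n-s)" "2*m + 2*2 = 2*(n-s)+2"
      using False \<open>s \<le> n\<close> by (simp_all add: m_def)
    then show ?thesis using eta_prod_add2[of 2 m] by (simp only: m_def)
  qed
  have X: "fps_X ^ (2*n+1) * fps_X ^ ((s+1)^2) = fps_X ^ (s^2) * (fps_X ^ (2*(n+s)+2) :: rat fps)"
    by (simp add: power2_eq_square algebra_simps flip: power_add)
  have "fps_X ^ (2*n+1) * jtp_coeff n (s + 1) * eta_prod 2 (Suc n + s) * eta_prod 2 (Suc n - s)
      = fps_X ^ (2*n+1) * (jtp_coeff n (s + 1) * eta_prod 2 (n + (s + 1)) * eta_prod 2 (n - (s + 1)))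
        * ((1 - fps_X ^ (2*(n-s))) * (1 - fps_X ^ (2*(n-s)+2)))"
    unfolding W_plus W_minus by (simp only: mult_ac)
  also have "\<dots> = (fps_X ^ (2*n+1) * fps_X ^ ((s+1)^2)) * eta_prod 2 (2*n)
        * ((1 - fps_X ^ (2*(n-s))) * (1 - fps_X ^ (2*(n-s)+2)))"
    using False \<open>s \<le> n\<close> by (subst IH) simp_all
  finally show ?thesis
    unfolding X by (simp only: mult_ac)
qed

lemma jtp_closed_form_lower:
  assumes IH: "\<And>j. j \<le> n \<Longrightarrow>
      jtp_coeff n j * eta_prod 2 (n + j) * eta_prod 2 (n - j) = fps_X ^ (j^2) * eta_prod 2 (2*n)"
    and "0 < s" "s \<le> n"
  shows "fps_X ^ (2*n+1) * jtp_coeff n (s - 1) * eta_prod 2 (Suc n + s) * eta_prod 2 (Suc n - s)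
       = fps_X ^ (s^2) * eta_prod 2 (2*n)
         * (fps_X ^ (2*(n-s)+2) * (1 - fps_X ^ (2*(n+s))) * (1 - fps_X ^ (2*(n+s)+2)))"
proof -
  have W_plus: "eta_prod 2 (Suc n + s)
      = eta_prod 2 (n + (s - 1)) * (1 - fps_X ^ (2*(n+s))) * (1 - fps_X ^ (2*(n+s)+2))"
  proof -
    have "Suc n + s = n + (s - 1) + 2" "2*(n + (s - 1)) + 2 = 2*(n+s)"
      "2*(n + (s - 1)) + 2*2 = 2*(n+s)+2"
      using assms(2) by simp_all
    then show ?thesis using eta_prod_add2[of 2 "n + (s - 1)"] by (simp only:)
  qed
  have W_minus: "eta_prod 2 (Suc n - s) = eta_prod 2 (n - (s - 1))"
    using assms(2,3) by simp
  have X: "fps_X ^ (2*n+1) * fps_X ^ ((s-1)^2) = fps_X ^ (s^2) * (fps_X ^ (2*(n-s)+2) :: rat fps)"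
  proof -
    have "2*n+1 + (s-1)^2 = s^2 + (2*(n-s)+2)"
      using assms(2,3) by (cases s) (simp_all add: power2_eq_square algebra_simps)
    then show ?thesis by (simp flip: power_add)
  qed
  have "fps_X ^ (2*n+1) * jtp_coeff n (s - 1) * eta_prod 2 (Suc n + s) * eta_prod 2 (Suc n - s)
      = fps_X ^ (2*n+1) * (jtp_coeff n (s - 1) * eta_prod 2 (n + (s - 1)) * eta_prod 2 (n - (s - 1)))
        * ((1 - fps_X ^ (2*(n+s))) * (1 - fps_X ^ (2*(n+s)+2)))"
    unfolding W_plus W_minus by (simp only: mult_ac)
  also have "\<dots> = (fps_X ^ (2*n+1) * fps_X ^ ((s-1)^2)) * eta_prod 2 (2*n)
        * ((1 - fps_X ^ (2*(n+s))) * (1 - fps_X ^ (2*(n+s)+2)))"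
    using assms(3) by (subst IH) simp_all
  finally show ?thesis
    unfolding X by (simp only: mult_ac)
qed

lemma jtp_step_identity:
  fixes A B t :: "'a::comm_ring_1"
  shows "(1 + A*B*t) * ((1 - A*t) * (1 - B*t)) + B*t * ((1 - A) * (1 - A*t))
         + A*t * ((1 - B) * (1 - B*t)) = (1 - A*B*t) * (1 - A*B*t*t)"
  by (simp add: algebra_simps)

lemma jtp_closed_form_Suc:
  assumes IH: "\<And>j. j \<le> n \<Longrightarrow>
      jtp_coeff n j * eta_prod 2 (n + j) * eta_prod 2 (n - j) = fps_X ^ (j^2) * eta_prod 2 (2*n)"
    and "s \<le> n"
  shows "jtp_coeff (Suc n) s * eta_prod 2 (Suc n + s) * eta_prod 2 (Suc n - s)
       = fps_X ^ (s^2) * eta_prod 2 (2 * Suc n)"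
proof -
  define A B t :: "rat fps"
    where "A = fps_X ^ (2*(n+s))" and "B = fps_X ^ (2*(n-s))" and "t = fps_X ^ 2"
  let ?W = "eta_prod 2" and ?c = "fps_X ^ (s^2) * eta_prod 2 (2*n)"
  have At: "fps_X ^ (2*(n+s)+2) = A * t" and Bt: "fps_X ^ (2*(n-s)+2) = B * t"
    by (simp_all only: A_def B_def t_def power_add)
  have ABt: "fps_X ^ (4*n+2) = A * B * t"
  proof -
    have "4*n+2 = 2*(n+s) + 2*(n-s) + 2" using assms(2) by simp
    then show ?thesis by (simp add: A_def B_def t_def flip: power_add)
  qed
  have centre: "(1 + fps_X ^ (4*n+2)) * jtp_coeff n s * ?W (Suc n + s) * ?W (Suc n - s)
      = ?c * ((1 + A*B*t) * ((1 - A*t) * (1 - B*t)))"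
  proof -
    have "?W (Suc n + s) = ?W (n + s) * (1 - A*t)" "?W (Suc n - s) = ?W (n - s) * (1 - B*t)"
      using assms(2) by (simp_all add: eta_prod_Suc Suc_diff_le flip: At Bt)
    then show ?thesis using IH[OF assms(2)] unfolding ABt by (simp add: mult_ac)
  qed
  have upper: "fps_X ^ (2*n+1) * jtp_coeff n (s + 1) * ?W (Suc n + s) * ?W (Suc n - s)
      = ?c * (A*t * ((1 - B) * (1 - B*t)))"
    using jtp_closed_form_upper[OF IH assms(2)]
    unfolding At Bt A_def[symmetric] B_def[symmetric] by (simp only: mult_ac)
  have lower: "fps_X ^ (2*n+1) * jtp_coeff n (if s = 0 then 1 else s - 1) * ?W (Suc n + s) * ?W (Suc n - s)
      = ?c * (B*t * ((1 - A) * (1 - A*t)))"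
  proof (cases "s = 0")
    case True
    then have "A = B" by (simp add: A_def B_def)
    then show ?thesis using upper True by (simp add: mult_ac)
  next
    case False
    then show ?thesis
      using jtp_closed_form_lower[OF IH, of s] assms(2)
      unfolding At Bt A_def[symmetric] B_def[symmetric] by (simp only: mult_ac if_False)
  qed
  have W_Suc: "?W (2 * Suc n) = ?W (2*n) * ((1 - A*B*t) * (1 - A*B*t*t))"
  proof -
    have "2 * Suc n = 2*n + 2" "2*(2*n) + 2 = 4*n+2" by simp_all
    moreover have "fps_X ^ (2*(2*n) + 2*2) = fps_X ^ (4*n+2) * t"
    proof -
      have "2*(2*n) + 2*2 = (4*n+2) + 2" by simp
      then show ?thesis by (simp only: t_def power_add)
    qed
    ultimately show ?thesis using eta_prod_add2[of 2 "2*n"] ABt by (simp only: mult.assoc)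
  qed
  have "jtp_coeff (Suc n) s * ?W (Suc n + s) * ?W (Suc n - s)
      = (1 + fps_X ^ (4*n+2)) * jtp_coeff n s * ?W (Suc n + s) * ?W (Suc n - s)
        + fps_X ^ (2*n+1) * jtp_coeff n (if s = 0 then 1 else s - 1) * ?W (Suc n + s) * ?W (Suc n - s)
        + fps_X ^ (2*n+1) * jtp_coeff n (s + 1) * ?W (Suc n + s) * ?W (Suc n - s)"
    by (simp only: jtp_coeff.simps algebra_simps)
  also have "\<dots> = ?c * ((1 - A*B*t) * (1 - A*B*t*t))"
    unfolding centre lower upper jtp_step_identity[symmetric] by (simp only: distrib_left)
  finally show ?thesis
    unfolding W_Suc by (simp only: mult_ac)
qed

lemma jtp_closed_form:
  "s \<le> n \<Longrightarrow>
    jtp_coeff n s * eta_prod 2 (n + s) * eta_prod 2 (n - s) = fps_X ^ (s^2) * eta_prod 2 (2*n)"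
proof (induction n arbitrary: s)
  case (Suc n)
  show ?case
  proof (cases "s = Suc n")
    case True
    then show ?thesis by (simp add: jtp_coeff_diag mult_2)
  next
    case False
    then show ?thesis using Suc by (intro jtp_closed_form_Suc) simp_all
  qed
qed simp

lemma jtp_coeff_X_power_dvd: "fps_X ^ (s^2) dvd jtp_coeff n s"
proof (cases "s \<le> n")
  case True
  let ?U = "eta_prod 2 (n + s) * eta_prod 2 (n - s)"
  have "?U * inverse ?U = 1" by (rule inverse_mult_eq_1') simp
  then have "jtp_coeff n s = jtp_coeff n s * ?U * inverse ?U"
    by (metis mult.assoc mult_1_right)
  also have "\<dots> = fps_X ^ (s^2) * (eta_prod 2 (2*n) * inverse ?U)"
    using jtp_closed_form[OF True] by (simp add: mult.assoc)
  finally show ?thesis by (rule dvdI)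
qed (simp add: jtp_coeff_eq_0)

(* phi(-q) = sum over all integers s of (-1)^s q^(s^2) *)
definition theta :: "rat fps" where
  "theta = Abs_fps (\<lambda>m. if m = 0 then 1 else (\<Sum>s=1..m. if m = s^2 then 2 * (-1) ^ s else 0))"

lemma theta_nth_0 [simp]: "theta $ 0 = 1"
  by (simp add: theta_def)

lemma theta_nth_square:
  assumes "0 < s"
  shows "theta $ (s^2) = 2 * (-1) ^ s"
proof -
  have "theta $ (s^2) = (\<Sum>t\<in>{1..s^2}. if t = s then 2 * (-1) ^ t else 0)"
    using assms by (simp add: theta_def power2_eq_iff eq_commute[of "s^2"])
  also have "\<dots> = 2 * (-1) ^ s"
    using assms by (simp add: power2_eq_square)
  finally show ?thesis .
qed

lemma theta_nth_nonsquare: "(\<And>s. 0 < s \<Longrightarrow> m \<noteq> s^2) \<Longrightarrow> theta $ m = (if m = 0 then 1 else 0)"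
  by (auto simp: theta_def intro!: sum.neutral)

lemma theta_nth_eq_sum:
  assumes "i \<le> M"
  shows "theta $ i = (if i = 0 then 1 else 0) + 2 * (\<Sum>s\<in>{1..M}. if i = s^2 then (-1) ^ s else 0)"
proof -
  have "(\<Sum>s\<in>{1..M}. if i = s^2 then (-1) ^ s else 0)
      = (\<Sum>s\<in>{1..i}. if i = s^2 then (-1) ^ s else (0::rat))"
  proof (rule sum.mono_neutral_right)
    show "\<forall>s\<in>{1..M} - {1..i}. (if i = s^2 then (-1) ^ s else 0) = (0::rat)"
      using le_square[of i] by (auto simp: power2_eq_square)
  qed (use assms in auto)
  then show ?thesis
    by (simp add: theta_def sum_distrib_left if_distrib cong: if_cong)
qed

lemma fps_cutoff_theta:
  assumes "n \<le> Suc M"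
  shows "fps_cutoff n theta = fps_cutoff n (1 + 2 * (\<Sum>s=1..M. (-1) ^ s * fps_X ^ (s^2)))"
proof -
  have "(-1 :: rat fps) ^ s = fps_const ((-1) ^ s)" for s
    by (simp flip: fps_const_power fps_const_neg)
  then have "(\<Sum>s=1..M. (-1) ^ s * fps_X ^ (s^2) :: rat fps) $ i
      = (\<Sum>s\<in>{1..M}. if i = s^2 then (-1) ^ s else 0)" for i
    by (simp add: fps_sum_nth if_distrib cong: if_cong)
  then have "(1 + 2 * (\<Sum>s=1..M. (-1) ^ s * fps_X ^ (s^2)) :: rat fps) $ i = theta $ i" if "i \<le> M" for i
    unfolding fps_add_nth numeral_fps_const fps_const_mult_left theta_nth_eq_sum[OF that] by simp
  then show ?thesis
    using assms by (simp add: fps_eq_iff)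
qed

lemma fps_cutoff_jtp_coeff:
  assumes "s \<le> 2*n"
  shows "fps_cutoff n (jtp_coeff (2*n) s * eta_f 2 ^ 2) = fps_cutoff n (fps_X ^ (s^2) * eta_f 2)"
proof (cases "s \<le> n")
  case True
  have "fps_cutoff n (jtp_coeff (2*n) s * eta_f 2 ^ 2)
      = fps_cutoff n (jtp_coeff (2*n) s * eta_prod 2 (2*n + s) * eta_prod 2 (2*n - s))"
    unfolding power2_eq_square mult.assoc
    using True by (intro fps_cutoff_mult_cong fps_cutoff_eta_f refl) simp_all
  also have "\<dots> = fps_cutoff n (fps_X ^ (s^2) * eta_prod 2 (2*(2*n)))"
    using assms by (simp add: jtp_closed_form)
  also have "\<dots> = fps_cutoff n (fps_X ^ (s^2) * eta_f 2)"
    by (intro fps_cutoff_mult_cong refl fps_cutoff_eta_f[symmetric]) simp_all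
  finally show ?thesis .
next
  case False
  then have "n \<le> s^2" by (simp add: power2_eq_square order_trans[OF _ le_square])
  obtain G where "jtp_coeff (2*n) s = fps_X ^ (s^2) * G"
    using jtp_coeff_X_power_dvd by blast
  with \<open>n \<le> s^2\<close> show ?thesis
    by (simp add: mult.assoc fps_cutoff_X_power_mult)
qed

theorem eta_f_1_square: "eta_f 1 ^ 2 = theta * eta_f 2"
proof (rule fps_cutoff_eqI)
  fix n
  let ?D = "jtp_coeff (2*n)" and ?E = "eta_f 2"
  have "fps_cutoff n (eta_f 1 ^ 2) = fps_cutoff n (eta_prod 1 (2 * (2*n)) ^ 2)"
    by (intro fps_cutoff_power_cong fps_cutoff_eta_f) simp_all
  also have "eta_prod 1 (2 * (2*n)) ^ 2 = jtp_sum (2*n) * eta_prod 2 (2*n) ^ 2"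
    by (simp only: eta_prod_1_double jtp_sum_eq_odd_prod_sq power_mult_distrib)
  also have "fps_cutoff n \<dots> = fps_cutoff n (jtp_sum (2*n) * ?E ^ 2)"
    by (intro fps_cutoff_mult_cong fps_cutoff_power_cong refl fps_cutoff_eta_f[symmetric]) simp_all
  also have "jtp_sum (2*n) * ?E ^ 2 = ?D 0 * ?E ^ 2 + 2 * (\<Sum>s=1..2*n. (-1) ^ s * (?D s * ?E ^ 2))"
    unfolding jtp_sum_def distrib_right mult.assoc sum_distrib_right by (simp only: mult.assoc)
  also have "fps_cutoff n \<dots>
      = fps_cutoff n (fps_X ^ (0^2) * ?E + 2 * (\<Sum>s=1..2*n. (-1) ^ s * (fps_X ^ (s^2) * ?E)))"
    unfolding fps_cutoff_add
    by (intro arg_cong2[where f = "(+)"] fps_cutoff_mult_cong fps_cutoff_sum_cong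
        fps_cutoff_jtp_coeff refl) simp_all
  also have "fps_X ^ (0^2) * ?E + 2 * (\<Sum>s=1..2*n. (-1) ^ s * (fps_X ^ (s^2) * ?E))
      = (1 + 2 * (\<Sum>s=1..2*n. (-1) ^ s * fps_X ^ (s^2))) * ?E"
    unfolding distrib_right mult.assoc sum_distrib_right by simp
  also have "fps_cutoff n \<dots> = fps_cutoff n (theta * ?E)"
    by (intro fps_cutoff_mult_cong refl fps_cutoff_theta[symmetric]) simp
  finally show "fps_cutoff n (eta_f 1 ^ 2) = fps_cutoff n (theta * ?E)" .
qed

section \<open>Eta quotients and the generating function\<close>

lemma fps_pow_int_of_nat: "fps_pow_int F (int n) = F ^ n"
  by (simp add: fps_pow_int_def)

lemma fps_pow_int_minus_of_nat: "fps_pow_int F (- int n) = inverse F ^ n"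
  by (simp add: fps_pow_int_def)

lemma fps_pow_int_0 [simp]: "fps_pow_int F 0 = 1"
  by (simp add: fps_pow_int_def)

lemma fps_pow_int_eq: "fps_pow_int F e = F ^ nat e * inverse F ^ nat (- e)"
  by (simp add: fps_pow_int_def)

lemma fps_pow_int_add:
  assumes "F $ 0 \<noteq> 0"
  shows "fps_pow_int F (a + b) = fps_pow_int F a * fps_pow_int F b"
proof -
  define d where "d = nat a + nat b - nat (a + b)"
  have pos: "nat a + nat b = nat (a + b) + d" and neg: "nat (-a) + nat (-b) = nat (-(a + b)) + d"
    unfolding d_def by arith+
  have "fps_pow_int F a * fps_pow_int F b = F ^ (nat (a + b) + d) * inverse F ^ (nat (-(a + b)) + d)"
    unfolding fps_pow_int_eq pos[symmetric] neg[symmetric] by (simp add: power_add mult_ac)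
  also have "\<dots> = fps_pow_int F (a + b) * (F * inverse F) ^ d"
    unfolding fps_pow_int_eq power_add power_mult_distrib by (simp only: mult_ac)
  finally show ?thesis
    using assms by (simp add: inverse_mult_eq_1')
qed

lemma fps_pow_int_mult_distrib: "fps_pow_int (F * G) e = fps_pow_int F e * fps_pow_int G e"
  by (simp add: fps_pow_int_eq fps_inverse_mult power_mult_distrib mult_ac)

lemma fps_pow_int_uminus: "F $ 0 \<noteq> 0 \<Longrightarrow> fps_pow_int F (- e) = inverse (fps_pow_int F e)"
  by (simp add: fps_pow_int_eq fps_inverse_mult fps_inverse_power mult.commute)

lemma fps_pow_int_mult_of_nat: "F $ 0 \<noteq> 0 \<Longrightarrow> fps_pow_int F (a * int n) = fps_pow_int F a ^ n"
  by (induction n) (simp_all add: distrib_left fps_pow_int_add mult.commute)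

lemma fps_pow_int_pow:
  assumes "F $ 0 \<noteq> 0"
  shows "fps_pow_int (fps_pow_int F a) e = fps_pow_int F (a * e)"
proof (cases "e \<ge> 0")
  case True
  then obtain n where "e = int n" by (metis nonneg_eq_int)
  then show ?thesis using assms by (simp add: fps_pow_int_of_nat fps_pow_int_mult_of_nat)
next
  case False
  then obtain n where "e = - int n" by (metis nonpos_int_cases not_le less_imp_le)
  then have "fps_pow_int (fps_pow_int F a) e = fps_pow_int F (- a) ^ n"
    using assms by (simp add: fps_pow_int_minus_of_nat fps_pow_int_uminus)
  also have "\<dots> = fps_pow_int F (a * e)"
    using fps_pow_int_mult_of_nat[OF assms, of "- a" n] \<open>e = - int n\<close> by simp
  finally show ?thesis .
qed

lemma fps_pow_int_compose:
  assumes "F $ 0 \<noteq> 0" "c $ 0 = 0"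
  shows "fps_pow_int (F oo c) e = fps_pow_int F e oo c"
  using assms by (simp add: fps_pow_int_eq fps_compose_mult_distrib fps_compose_power
      flip: fps_inverse_compose)

definition eta_quot :: "int \<Rightarrow> int \<Rightarrow> int \<Rightarrow> rat fps" where
  "eta_quot a b c = fps_pow_int (eta_f 1) a * fps_pow_int (eta_f 2) b * fps_pow_int (eta_f 4) c"

lemma eta_quot_mult: "eta_quot a b c * eta_quot a' b' c' = eta_quot (a + a') (b + b') (c + c')"
  by (simp add: eta_quot_def fps_pow_int_add mult_ac)

lemma fps_pow_int_eta_quot: "fps_pow_int (eta_quot a b c) e = eta_quot (a * e) (b * e) (c * e)"
  by (simp add: eta_quot_def fps_pow_int_mult_distrib fps_pow_int_pow)

lemma theta_eq_eta_quot: "theta = eta_quot 2 (-1) 0"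
proof -
  have "theta = theta * eta_f 2 * inverse (eta_f 2)"
    by (simp add: mult.assoc inverse_mult_eq_1')
  also have "\<dots> = eta_quot 2 (-1) 0"
    by (simp add: eta_quot_def fps_pow_int_def flip: eta_f_1_square)
  finally show ?thesis .
qed

lemma eta_f_1_compose_uminus_X_eq_eta_quot: "eta_f 1 oo - fps_X = eta_quot (-1) 3 (-1)"
proof -
  have "eta_f 1 oo - fps_X = ((eta_f 1 oo - fps_X) * eta_f 1 * eta_f 4) * inverse (eta_f 1) * inverse (eta_f 4)"
    by (simp add: mult.assoc inverse_mult_eq_1' mult.left_commute[of "eta_f 4"])
  also have "\<dots> = eta_quot (-1) 3 (-1)"
    unfolding eta_f_1_compose_uminus_X by (simp add: eta_quot_def fps_pow_int_def mult_ac)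
  finally show ?thesis .
qed

lemma fps_compose_X_power2_compose_uminus_X:
  "(F oo fps_X ^ 2) oo - fps_X = (F oo fps_X ^ 2 :: 'a::comm_ring_1 fps)"
  by (rule fps_ext) (auto simp: fps_compose_uminus_X_nth fps_compose_X_power_nth)

lemma theta_compose_uminus_X: "theta oo - fps_X = eta_quot (-2) 5 (-2)"
proof -
  have eta_2: "eta_f 2 oo - fps_X = eta_f 2"
    using eta_f_compose_X_power[of 2 1] fps_compose_X_power2_compose_uminus_X[of "eta_f 1"] by simp
  have "theta oo - fps_X = fps_pow_int (eta_f 1 oo - fps_X) 2 * fps_pow_int (eta_f 2 oo - fps_X) (-1)"
    unfolding theta_eq_eta_quot eta_quot_def
    by (simp add: fps_compose_mult_distrib flip: fps_pow_int_compose)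
  also have "\<dots> = eta_quot (-2) 5 (-2)"
    unfolding eta_2 eta_f_1_compose_uminus_X_eq_eta_quot fps_pow_int_eta_quot
    by (simp add: eta_quot_def fps_pow_int_add[symmetric] mult_ac)
  finally show ?thesis .
qed

lemma theta_compose_X_power2: "theta oo fps_X ^ 2 = eta_quot 0 2 (-1)"
  using eta_f_compose_X_power[of 2 1] eta_f_compose_X_power[of 2 2]
  unfolding theta_eq_eta_quot eta_quot_def
  by (simp add: fps_compose_mult_distrib flip: fps_pow_int_compose)

lemma abar_eq_theta_coeff:
  "abar c n = ((theta oo - fps_X) * (fps_pow_int theta (- (c + 1)) oo fps_X ^ 2)) $ n"
proof -
  have "fps_pow_int theta (- (c + 1)) oo fps_X ^ 2 = eta_quot 0 (- 2 * (c + 1)) (c + 1)"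
    by (simp add: fps_pow_int_compose[symmetric] theta_compose_X_power2 fps_pow_int_eta_quot add.commute)
  then have "(theta oo - fps_X) * (fps_pow_int theta (- (c + 1)) oo fps_X ^ 2) = eta_quot (-2) (3 - 2*c) (c - 1)"
    by (simp add: theta_compose_uminus_X eta_quot_mult algebra_simps)
  then show ?thesis
    by (simp add: abar_def eta_quot_def algebra_simps)
qed

section \<open>2-adic bounds on coefficients\<close>

definition pow2_dvd :: "nat \<Rightarrow> rat \<Rightarrow> bool" where
  "pow2_dvd e x \<longleftrightarrow> (\<exists>z::int. x = 2 ^ e * of_int z)"

lemma pow2_dvd_iff: "pow2_dvd e x \<longleftrightarrow> (\<exists>m::int. x = of_int (2 ^ e * m))"
  by (simp add: pow2_dvd_def)

lemma pow2_dvd_0 [simp]: "pow2_dvd e 0"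
  by (auto simp: pow2_dvd_def intro: exI[of _ 0])

lemma pow2_dvd_1: "pow2_dvd 0 1"
  by (auto simp: pow2_dvd_def intro: exI[of _ 1])

lemma pow2_dvd_2_times_sign: "pow2_dvd 1 (2 * (-1) ^ s)"
  by (auto simp: pow2_dvd_def intro: exI[of _ "(-1) ^ s"])

lemma pow2_dvd_add: "pow2_dvd e x \<Longrightarrow> pow2_dvd e y \<Longrightarrow> pow2_dvd e (x + y)"
  unfolding pow2_dvd_def by (metis distrib_left of_int_add)

lemma pow2_dvd_uminus: "pow2_dvd e x \<Longrightarrow> pow2_dvd e (- x)"
  unfolding pow2_dvd_def by (metis mult_minus_right of_int_minus)

lemma pow2_dvd_sum: "(\<And>i. i \<in> S \<Longrightarrow> pow2_dvd e (f i)) \<Longrightarrow> pow2_dvd e (\<Sum>i\<in>S. f i)"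
  by (induction S rule: infinite_finite_induct) (simp_all add: pow2_dvd_add)

lemma pow2_dvd_mult: "pow2_dvd a x \<Longrightarrow> pow2_dvd b y \<Longrightarrow> pow2_dvd (a + b) (x * y)"
proof -
  assume "pow2_dvd a x" "pow2_dvd b y"
  then obtain z z' where "x = 2 ^ a * of_int z" "y = 2 ^ b * of_int z'"
    unfolding pow2_dvd_def by blast
  then have "x * y = 2 ^ (a + b) * of_int (z * z')"
    by (simp add: power_add)
  then show ?thesis unfolding pow2_dvd_def by blast
qed

lemma pow2_dvd_mono: "e' \<le> e \<Longrightarrow> pow2_dvd e x \<Longrightarrow> pow2_dvd e' x"
proof -
  assume "e' \<le> e" "pow2_dvd e x"
  then obtain d z where "e = e' + d" "x = 2 ^ e * of_int z"
    unfolding pow2_dvd_def le_iff_add by blast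
  then have "x = 2 ^ e' * of_int (2 ^ d * z)"
    by (simp add: power_add)
  then show ?thesis unfolding pow2_dvd_def by blast
qed

definition pow2_profile :: "(nat \<Rightarrow> nat) \<Rightarrow> rat fps \<Rightarrow> bool" where
  "pow2_profile v F \<longleftrightarrow> (\<forall>n. pow2_dvd (v n) (F $ n))"

lemma pow2_profile_one: "v 0 = 0 \<Longrightarrow> pow2_profile v 1"
  unfolding pow2_profile_def by (simp add: pow2_dvd_1)

lemma pow2_profile_mult:
  assumes "\<And>i j. w (i + j) \<le> u i + v j" "pow2_profile u F" "pow2_profile v G"
  shows "pow2_profile w (F * G)"
  unfolding pow2_profile_def fps_mult_nth
proof (intro allI pow2_dvd_sum)
  fix n i :: nat assume "i \<in> {0..n}"
  then have "w n \<le> u i + v (n - i)" using assms(1)[of i "n - i"] by simp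
  moreover have "pow2_dvd (u i + v (n - i)) (F $ i * G $ (n - i))"
    using assms(2,3) unfolding pow2_profile_def by (intro pow2_dvd_mult) auto
  ultimately show "pow2_dvd (w n) (F $ i * G $ (n - i))" by (rule pow2_dvd_mono)
qed

lemma pow2_profile_power:
  assumes "v 0 = 0" "\<And>i j. v (i + j) \<le> v i + v j" "pow2_profile v F"
  shows "pow2_profile v (F ^ r)"
proof (induction r)
  case (Suc r)
  then show ?case using pow2_profile_mult[OF assms(2,3)] by simp
qed (simp add: assms(1) pow2_profile_one)

lemma pow2_profile_square:
  assumes cross: "\<And>i j. w (i + j) \<le> v i + v j + 1" and diag: "\<And>i. w (2 * i) \<le> 2 * v i"
    and F: "pow2_profile v F"
  shows "pow2_profile w (F ^ 2)"
  unfolding pow2_profile_def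
proof
  fix n
  let ?g = "\<lambda>i. F $ i * F $ (n - i)"
  \<comment> \<open>The terms F_i F_(n-i) and F_(n-i) F_i pair up; only the middle term misses the factor 2.\<close>
  define L where "L = {i \<in> {0..n}. 2 * i < n}"
  define D where "D = {i \<in> {0..n}. 2 * i = n}"
  define R where "R = {i \<in> {0..n}. n < 2 * i}"
  have "(F ^ 2) $ n = sum ?g {0..n}"
    by (simp add: power2_eq_square fps_mult_nth)
  also have "\<dots> = sum ?g L + sum ?g D + sum ?g R"
  proof -
    have "{0..n} = L \<union> D \<union> R" "L \<inter> D = {}" "(L \<union> D) \<inter> R = {}"
      by (auto simp: L_def D_def R_def)
    moreover have "finite L" "finite D" "finite R"
      by (simp_all add: L_def D_def R_def)
    ultimately show ?thesis by (simp add: sum.union_disjoint)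
  qed
  also have "sum ?g R = sum ?g L"
  proof (rule sum.reindex_bij_witness[of _ "\<lambda>i. n - i" "\<lambda>i. n - i"])
  qed (auto simp: L_def R_def mult.commute)
  finally have sq: "(F ^ 2) $ n = 2 * sum ?g L + sum ?g D" by simp
  have "pow2_dvd (w n) (2 * sum ?g L)"
  proof -
    have "pow2_dvd (1 + (v i + v (n - i))) (2 * ?g i)" if "i \<in> L" for i
      using F unfolding pow2_profile_def
      by (intro pow2_dvd_mult) (auto simp: pow2_dvd_def intro: exI[of _ 1])
    moreover have "w n \<le> 1 + (v i + v (n - i))" if "i \<in> L" for i
      using cross[of i "n - i"] that by (simp add: L_def)
    ultimately show ?thesis
      unfolding sum_distrib_left by (intro pow2_dvd_sum) (blast intro: pow2_dvd_mono)
  qed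
  moreover have "pow2_dvd (w n) (sum ?g D)"
  proof (intro pow2_dvd_sum)
    fix i assume "i \<in> D"
    then have "n - i = i" "n = 2 * i" by (auto simp: D_def)
    then show "pow2_dvd (w n) (?g i)"
      using F diag[of i] unfolding pow2_profile_def
      by (auto simp: mult_2 intro: pow2_dvd_mono[OF _ pow2_dvd_mult])
  qed
  ultimately show "pow2_dvd (w n) ((F ^ 2) $ n)"
    unfolding sq by (rule pow2_dvd_add)
qed

lemma pow2_profile_inverse:
  assumes F0: "F $ 0 = 1" and w0: "w 0 = 0" and step: "\<And>i j. 0 < i \<Longrightarrow> w (i + j) \<le> v i + w j"
    and F: "pow2_profile v F"
  shows "pow2_profile w (inverse F)"
  unfolding pow2_profile_def
proof
  fix n
  show "pow2_dvd (w n) (inverse F $ n)"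
  proof (induction n rule: less_induct)
    case (less n)
    show ?case
    proof (cases "n = 0")
      case True
      then show ?thesis using F0 w0 by (simp add: pow2_dvd_1)
    next
      case False
      have "0 = (F * inverse F) $ n"
        using False F0 by (simp add: inverse_mult_eq_1')
      also have "\<dots> = inverse F $ n + (\<Sum>i=1..n. F $ i * inverse F $ (n - i))"
        unfolding fps_mult_nth using F0 by (simp add: sum.atLeast_Suc_atMost)
      finally have rec: "inverse F $ n = - (\<Sum>i=1..n. F $ i * inverse F $ (n - i))"
        by (simp add: eq_neg_iff_add_eq_0)
      show ?thesis
        unfolding rec
      proof (intro pow2_dvd_uminus pow2_dvd_sum)
        fix i assume i: "i \<in> {1..n}"
        then have "w n \<le> v i + w (n - i)" using step[of i "n - i"] by simp
        moreover have "pow2_dvd (v i + w (n - i)) (F $ i * inverse F $ (n - i))"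
          using F i unfolding pow2_profile_def by (intro pow2_dvd_mult less.IH) auto
        ultimately show "pow2_dvd (w n) (F $ i * inverse F $ (n - i))"
          by (rule pow2_dvd_mono)
      qed
    qed
  qed
qed

definition mod4_weight :: "nat \<Rightarrow> nat \<Rightarrow> nat \<Rightarrow> nat \<Rightarrow> nat" where
  "mod4_weight a b c n =
     (if n mod 4 = 0 then 0 else if n mod 4 = 1 then a else if n mod 4 = 2 then b else c)"

lemma less_4_cases: "(s::nat) < 4 \<longleftrightarrow> s = 0 \<or> s = 1 \<or> s = 2 \<or> s = 3"
  by arith

lemma mod4_weight_mod [simp]: "mod4_weight a b c (n mod 4) = mod4_weight a b c n"
  by (simp add: mod4_weight_def)

lemma mod4_weight_add_le:
  assumes "\<And>s t. s < 4 \<Longrightarrow> t < 4 \<Longrightarrow>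
    mod4_weight a b c (s + t) \<le> mod4_weight a' b' c' s + mod4_weight a'' b'' c'' t + d"
  shows "mod4_weight a b c (i + j) \<le> mod4_weight a' b' c' i + mod4_weight a'' b'' c'' j + d"
  using assms[of "i mod 4" "j mod 4"]
  by (metis mod4_weight_mod mod_add_eq mod_less_divisor zero_less_numeral)

lemma mod4_weight_double_le:
  assumes "\<And>s. s < 4 \<Longrightarrow> mod4_weight a b c (2 * s) \<le> 2 * mod4_weight a' b' c' s"
  shows "mod4_weight a b c (2 * i) \<le> 2 * mod4_weight a' b' c' i"
  using assms[of "i mod 4"]
  by (metis mod4_weight_mod mod_mult_right_eq mod_less_divisor zero_less_numeral)

lemma square_mod_4: "(s::nat)^2 mod 4 = (if even s then 0 else 1)"
proof (cases "even s")
  case True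
  then obtain t where "s = 2 * t" by blast
  then show ?thesis by (simp add: power2_eq_square)
next
  case False
  then have "s^2 mod 8 = 1"
    using square_mod_8_eq_1_iff[of s] by (simp add: cong_def)
  moreover have "s^2 mod 8 mod 4 = s^2 mod 4"
    by (rule mod_mod_cancel) simp
  ultimately have "s^2 mod 4 = 1"
    by simp
  with False show ?thesis by simp
qed

lemma theta_pow2_profile: "pow2_profile (mod4_weight 1 K K) theta"
  unfolding pow2_profile_def
proof
  fix n
  show "pow2_dvd (mod4_weight 1 K K n) (theta $ n)"
  proof (cases "\<exists>s. 0 < s \<and> n = s^2")
    case True
    then obtain s where s: "0 < s" "n = s^2" by blast
    then have "mod4_weight 1 K K n \<le> 1"
      by (simp add: mod4_weight_def square_mod_4)
    then show ?thesis
      using s by (simp add: theta_nth_square pow2_dvd_mono[OF _ pow2_dvd_2_times_sign])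
  next
    case False
    then have "theta $ n = (if n = 0 then 1 else 0)"
      by (intro theta_nth_nonsquare) blast
    then show ?thesis by (simp add: mod4_weight_def pow2_dvd_1)
  qed
qed

lemma inverse_theta_pow2_profile: "pow2_profile (mod4_weight 1 2 3) (inverse theta)"
proof (rule pow2_profile_inverse[OF _ _ _ theta_pow2_profile[of 3]])
  show "mod4_weight 1 2 3 (i + j) \<le> mod4_weight 1 3 3 i + mod4_weight 1 2 3 j" for i j
    by (rule mod4_weight_add_le[where d = 0, unfolded add_0_right])
      (auto simp: less_4_cases mod4_weight_def)
qed (simp_all add: mod4_weight_def)

(* At k = 0 the middle weight has to be 2: the weights (1, 1, 3) are not preserved by squaring. *)
lemma inverse_theta_iterated_square_pow2_profile:
  "pow2_profile (mod4_weight (k + 1) (max (k + 1) 2) (k + 3)) (inverse theta ^ 2 ^ k)"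
proof (induction k)
  case 0
  have "0 + 1 = (1::nat)" "max 1 2 = (2::nat)" "0 + 3 = (3::nat)" by simp_all
  then show ?case using inverse_theta_pow2_profile by (simp only: power_0 power_one_right)
next
  case (Suc k)
  have "inverse theta ^ 2 ^ Suc k = (inverse theta ^ 2 ^ k) ^ 2"
    by (simp add: power_Suc2 power_mult del: power_Suc)
  also have "pow2_profile (mod4_weight (Suc k + 1) (max (Suc k + 1) 2) (Suc k + 3)) \<dots>"
  proof (rule pow2_profile_square[OF _ _ Suc.IH])
    show "mod4_weight (Suc k + 1) (max (Suc k + 1) 2) (Suc k + 3) (i + j)
        \<le> mod4_weight (k + 1) (max (k + 1) 2) (k + 3) i + mod4_weight (k + 1) (max (k + 1) 2) (k + 3) j + 1"
      for i j by (rule mod4_weight_add_le) (auto simp: less_4_cases mod4_weight_def)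
    show "mod4_weight (Suc k + 1) (max (Suc k + 1) 2) (Suc k + 3) (2 * i)
        \<le> 2 * mod4_weight (k + 1) (max (k + 1) 2) (k + 3) i"
      for i by (rule mod4_weight_double_le) (auto simp: less_4_cases mod4_weight_def)
  qed
  finally show ?case .
qed

lemma theta_sq_pow2_profile:
  assumes "K \<ge> 1"
  shows "pow2_profile (mod4_weight 2 2 K) (theta ^ 2)"
proof (rule pow2_profile_square[OF _ _ theta_pow2_profile[of K]])
  show "mod4_weight 2 2 K (i + j) \<le> mod4_weight 1 K K i + mod4_weight 1 K K j + 1" for i j
    by (rule mod4_weight_add_le) (use assms in \<open>auto simp: less_4_cases mod4_weight_def\<close>)
  show "mod4_weight 2 2 K (2 * i) \<le> 2 * mod4_weight 1 K K i" for i
    by (rule mod4_weight_double_le) (use assms in \<open>auto simp: less_4_cases mod4_weight_def\<close>)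
qed

lemma theta_power_pow2_profile:
  assumes "k \<ge> 1" "j \<le> 1"
  shows "pow2_profile (mod4_weight 0 0 (k + 2)) (fps_pow_int theta (2 * int j - 2 ^ (k - 1) * int r))"
proof -
  let ?Q = "(inverse theta ^ 2 ^ (k - 1)) ^ r"
  have "2 * int j - 2 ^ (k - 1) * int r = - int (2 ^ (k - 1) * r) + int (2 * j)"
    by simp
  then have "fps_pow_int theta (2 * int j - 2 ^ (k - 1) * int r) = ?Q * theta ^ (2 * j)"
    by (simp only: fps_pow_int_add theta_nth_0 one_neq_zero not_False_eq_True
        fps_pow_int_minus_of_nat fps_pow_int_of_nat power_mult)
  moreover have "pow2_profile (mod4_weight k (max k 2) (k + 2)) ?Q"
  proof (rule pow2_profile_power)
    show "pow2_profile (mod4_weight k (max k 2) (k + 2)) (inverse theta ^ 2 ^ (k - 1))"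
      using inverse_theta_iterated_square_pow2_profile[of "k - 1"] assms(1) by simp
    show "mod4_weight k (max k 2) (k + 2) (i + j)
        \<le> mod4_weight k (max k 2) (k + 2) i + mod4_weight k (max k 2) (k + 2) j" for i j
      by (rule mod4_weight_add_le[where d = 0, unfolded add_0_right])
        (use assms(1) in \<open>auto simp: less_4_cases mod4_weight_def\<close>)
  qed (simp add: mod4_weight_def)
  moreover have "pow2_profile (mod4_weight 2 2 (k + 2)) (theta ^ (2 * j))"
    using assms(2) theta_sq_pow2_profile[of "k + 2"]
    by (cases j) (simp_all add: pow2_profile_one mod4_weight_def)
  moreover have "mod4_weight 0 0 (k + 2) (i + j)
      \<le> mod4_weight k (max k 2) (k + 2) i + mod4_weight 2 2 (k + 2) j" for i j
    by (rule mod4_weight_add_le[where d = 0, unfolded add_0_right])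
      (auto simp: less_4_cases mod4_weight_def)
  ultimately show ?thesis
    by (metis pow2_profile_mult)
qed

section \<open>The congruences\<close>

lemma theta_nth_odd:
  assumes "odd i" "theta $ i \<noteq> 0"
  shows "i mod 8 = 1 \<and> pow2_dvd 1 (theta $ i)"
proof -
  obtain s where s: "0 < s" "i = s^2"
    using assms theta_nth_nonsquare[of i] by (cases "i = 0") auto
  then have "odd s" using assms(1) by simp
  then have "i mod 8 = 1"
    using square_mod_8_eq_1_iff[of s] s(2) by (simp add: cong_def)
  then show ?thesis
    using s pow2_dvd_2_times_sign[of s] by (simp add: theta_nth_square)
qed

lemma pow2_dvd_nth_8n7:
  assumes R: "\<And>l. l mod 4 = 3 \<Longrightarrow> pow2_dvd e (R $ l)"
  shows "pow2_dvd (e + 1) (((theta oo - fps_X) * (R oo fps_X ^ 2)) $ (8 * n + 7))"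
  unfolding fps_mult_nth
proof (intro pow2_dvd_sum)
  fix i assume i: "i \<in> {0..8 * n + 7}"
  show "pow2_dvd (e + 1) ((theta oo - fps_X) $ i * (R oo fps_X ^ 2) $ (8 * n + 7 - i))"
  proof (cases "even i \<or> theta $ i = 0")
    case True
    then show ?thesis
      using i by (auto simp: fps_compose_uminus_X_nth fps_compose_X_power_nth)
  next
    case False
    then have "odd i" "i mod 8 = 1" "pow2_dvd 1 (theta $ i)"
      using theta_nth_odd by auto
    define q where "q = i div 8"
    have q: "i = 8 * q + 1"
      using mult_div_mod_eq[of 8 i] \<open>i mod 8 = 1\<close> by (simp add: q_def)
    with i have "8 * n + 7 - i = 2 * (4 * (n - q) + 3)"
      by simp
    then have even: "even (8 * n + 7 - i)" and class3: "(8 * n + 7 - i) div 2 mod 4 = 3"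
      by simp_all
    have "pow2_dvd (1 + e) (- (theta $ i) * R $ ((8 * n + 7 - i) div 2))"
      using \<open>pow2_dvd 1 (theta $ i)\<close> R[OF class3] by (intro pow2_dvd_mult pow2_dvd_uminus)
    then show ?thesis
      using \<open>odd i\<close> even by (simp add: fps_compose_uminus_X_nth fps_compose_X_power_nth add.commute)
  qed
qed

lemma abar_8n7_pow2_dvd:
  assumes "k \<ge> 1" "j \<le> 1" "c + 1 = 2 ^ (k - 1) * int r - 2 * int j"
  shows "pow2_dvd (k + 3) (abar c (8 * n + 7))"
proof -
  have "pow2_profile (mod4_weight 0 0 (k + 2)) (fps_pow_int theta (- (c + 1)))"
    using theta_power_pow2_profile[OF assms(1,2), of r] assms(3) by simp
  then have "pow2_dvd (mod4_weight 0 0 (k + 2) l) (fps_pow_int theta (- (c + 1)) $ l)" for l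
    unfolding pow2_profile_def ..
  moreover have "mod4_weight 0 0 (k + 2) l = k + 2" if "l mod 4 = 3" for l
    using that by (simp add: mod4_weight_def)
  ultimately have "pow2_dvd (k + 2) (fps_pow_int theta (- (c + 1)) $ l)" if "l mod 4 = 3" for l
    using that by metis
  from pow2_dvd_nth_8n7[OF this] show ?thesis
    unfolding abar_eq_theta_coeff by (simp add: numeral_3_eq_3)
qed

theorem theorem1p8:
  fixes n k i :: nat
  assumes "k \<ge> 1"
  shows "(\<exists>m::int. abar (2 ^ k * int i + (2 ^ k - 6) div 2) (8 * n + 7) = of_int (2 ^ (k + 3) * m))
       \<and> (\<exists>m::int. abar (2 ^ k * int i + (2 ^ k - 2) div 2) (8 * n + 7) = of_int (2 ^ (k + 3) * m))"
proof -
  have two_pow: "(2::int) ^ k = 2 * 2 ^ (k - 1)"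
    using assms by (cases k) simp_all
  have "2 ^ k * int i + (2 ^ k - 6) div 2 + 1 = 2 ^ (k - 1) * int (2 * i + 1) - 2 * int 1"
    "2 ^ k * int i + (2 ^ k - 2) div 2 + 1 = 2 ^ (k - 1) * int (2 * i + 1) - 2 * int 0"
    unfolding two_pow by (simp_all add: algebra_simps)
  then show ?thesis
    using abar_8n7_pow2_dvd[OF assms, of 1] abar_8n7_pow2_dvd[OF assms, of 0]
    unfolding pow2_dvd_iff by blast
qed

end
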